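(* Let $p\ge0$, $\Omega>0$, $S\in\mathcal B_\Omega$, $x\in[0,\pi]$. Then the operator $\tilde Q(x)T^{-1}$ maps $m$ into $l_2$, and for every $f\in m$, $$\|\tilde Q(x)T^{-1}f\|_{l_2}\le C\|f\|_m,$$ where $C$ depends only on $p$ and $\Omega$.
   Context: $\mathcal S_p$: collections $S=\{\lambda_n,\alpha_n\}_{n\ge1}$ of complex numbers with $\rho_n:=\sqrt{\lambda_n}$ ($\arg\rho_n\in[-\pi/2,\pi/2)$), $\rho_n=n-p-1+\varkappa_n$, $\alpha_n=2/\pi+\kappa_n$, $\{\varkappa_n\},\{\kappa_n\}\in l_2$. Model data: $\tilde\rho_n=0$ for $n\le p+1$, $\tilde\rho_n=n-p-1$ for $n\ge p+1$, $\tilde\lambda_n=\tilde\rho_n^2$; $\tilde\alpha_1=1/\pi$, $\tilde\alpha_n=0$ for $2\le n\le p+1$, $\tilde\alpha_n=2/\pi$ for $n\ge p+2$. $\xi_n=|\rho_n-\tilde\rho_n|+|\alpha_n-\tilde\alpha_n|$, $\mathcal B_\Omega=\{S\in\mathcal S_p:(\sum\xi_n^2)^{1/2}\le\Omega\}$. Notation: $\lambda_{n0}=\lambda_n,\rho_{n0}=\rho_n,\alpha_{n0}=\alpha_n$, $\lambda_{n1}=\tilde\lambda_n,\rho_{n1}=\tilde\rho_n,\alpha_{n1}=\tilde\alpha_n$, $\hat\rho_n=\rho_n-\tilde\rho_n$; $\tilde D(x,\lambda,\mu)=\int_0^x\cos(\sqrt\lambda t)\cos(\sqrt\mu t)dt$;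 $\tilde Q_{ni,kj}(x)=\alpha_{kj}\tilde D(x,\rho_{ni}^2,\rho_{kj}^2)$; $\tilde Q_{nk}=\begin{pmatrix}\tilde Q_{n0,k0}&-\tilde Q_{n0,k1}\\ \tilde Q_{n1,k0}&-\tilde Q_{n1,k1}\end{pmatrix}$; $T_k^{-1}=\begin{pmatrix}\hat\rho_k&1\\0&1\end{pmatrix}$. $m$: Banach space of bounded sequences $f=(f_{ni})_{n\ge1,i=0,1}$ with $\|f\|_m=\sup|f_{ni}|$; $l_2$ is the space of square-summable sequences indexed by $(n,i)$. For $f\in m$, $(T^{-1}f)_n=T_n^{-1}f_n=(\hat\rho_nf_{n0}+f_{n1},f_{n1})^T$ and $(\tilde Q(x)T^{-1}f)_n=\sum_{k\ge1}\tilde Q_{nk}(x)T_k^{-1}f_k$, $f_k=(f_{k0},f_{k1})^T$. *)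

theory Defs
  imports "HOL-Analysis.Analysis"
begin

text \<open>Sequences are indexed by n \<ge> 1 (the value at index 0 is ignored);
  the component index i (or j) ranges over {0,1}.\<close>

text \<open>Square root with arg in [-pi/2, pi/2).\<close>
definition sqrt_branch :: "complex \<Rightarrow> complex" where
  "sqrt_branch z = (if Re (csqrt z) = 0 \<and> Im (csqrt z) > 0 then - csqrt z else csqrt z)"

definition rho :: "(nat \<Rightarrow> complex) \<Rightarrow> nat \<Rightarrow> complex" where
  "rho lam n = sqrt_branch (lam n)"

definition in_Sp :: "nat \<Rightarrow> (nat \<Rightarrow> complex) \<Rightarrow> (nat \<Rightarrow> complex) \<Rightarrow> bool" where
  "in_Sp p lam al \<longleftrightarrow>
     (\<exists>vk kp :: nat \<Rightarrow> complex.
        (\<forall>n\<ge>1. rho lam n = of_int (int n - int p - 1) + vk n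
              \<and> al n = complex_of_real (2 / pi) + kp n)
        \<and> summable (\<lambda>n. (cmod (vk (Suc n)))\<^sup>2)
        \<and> summable (\<lambda>n. (cmod (kp (Suc n)))\<^sup>2))"

definition rho_t :: "nat \<Rightarrow> nat \<Rightarrow> real" where
  "rho_t p n = real (n - p - 1)"

definition alpha_t :: "nat \<Rightarrow> nat \<Rightarrow> real" where
  "alpha_t p n = (if n = 1 then 1 / pi else if n \<le> p + 1 then 0 else 2 / pi)"

definition xi :: "nat \<Rightarrow> (nat \<Rightarrow> complex) \<Rightarrow> (nat \<Rightarrow> complex) \<Rightarrow> nat \<Rightarrow> real" where
  "xi p lam al n = cmod (rho lam n - of_real (rho_t p n)) + cmod (al n - of_real (alpha_t p n))"

definition in_B :: "nat \<Rightarrow> real \<Rightarrow> (nat \<Rightarrow> complex) \<Rightarrow> (nat \<Rightarrow> complex) \<Rightarrow> bool" where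
  "in_B p \<Omega> lam al \<longleftrightarrow> in_Sp p lam al
     \<and> summable (\<lambda>n. (xi p lam al (Suc n))\<^sup>2)
     \<and> sqrt (\<Sum>n. (xi p lam al (Suc n))\<^sup>2) \<le> \<Omega>"

text \<open>lambda_{nj}, rho_{nj}, alpha_{nj}: j = 0 original data, j = 1 model data.\<close>
definition lamj :: "nat \<Rightarrow> (nat \<Rightarrow> complex) \<Rightarrow> nat \<Rightarrow> nat \<Rightarrow> complex" where
  "lamj p lam n j = (if j = 0 then lam n else of_real ((rho_t p n)\<^sup>2))"

definition alj :: "nat \<Rightarrow> (nat \<Rightarrow> complex) \<Rightarrow> nat \<Rightarrow> nat \<Rightarrow> complex" where
  "alj p al n j = (if j = 0 then al n else of_real (alpha_t p n))"

definition rho_hat :: "nat \<Rightarrow> (nat \<Rightarrow> complex) \<Rightarrow> nat \<Rightarrow> complex" where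
  "rho_hat p lam n = rho lam n - of_real (rho_t p n)"

definition Dt :: "real \<Rightarrow> complex \<Rightarrow> complex \<Rightarrow> complex" where
  "Dt x l m = integral {0..x}
      (\<lambda>t. cos (csqrt l * of_real t) * cos (csqrt m * of_real t))"

definition Qt :: "nat \<Rightarrow> (nat \<Rightarrow> complex) \<Rightarrow> (nat \<Rightarrow> complex) \<Rightarrow> real
                   \<Rightarrow> nat \<Rightarrow> nat \<Rightarrow> nat \<Rightarrow> nat \<Rightarrow> complex" where
  "Qt p lam al x n i k j = alj p al k j * Dt x (lamj p lam n i) (lamj p lam k j)"

text \<open>k-th term of the n,i component of Q(x) T^{-1} f, i.e. the i-th row of
  Q_{nk}(x) T_k^{-1} f_k.\<close>
definition QT_term :: "nat \<Rightarrow> (nat \<Rightarrow> complex) \<Rightarrow> (nat \<Rightarrow> complex) \<Rightarrow> real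
                   \<Rightarrow> (nat \<Rightarrow> nat \<Rightarrow> complex) \<Rightarrow> nat \<Rightarrow> nat \<Rightarrow> nat \<Rightarrow> complex" where
  "QT_term p lam al x f n i k =
     Qt p lam al x n i k 0 * (rho_hat p lam k * f k 0 + f k 1) - Qt p lam al x n i k 1 * f k 1"

definition QT :: "nat \<Rightarrow> (nat \<Rightarrow> complex) \<Rightarrow> (nat \<Rightarrow> complex) \<Rightarrow> real
                   \<Rightarrow> (nat \<Rightarrow> nat \<Rightarrow> complex) \<Rightarrow> nat \<Rightarrow> nat \<Rightarrow> complex" where
  "QT p lam al x f n i = (\<Sum>k. QT_term p lam al x f n i (Suc k))"

definition bounded_seq :: "(nat \<Rightarrow> nat \<Rightarrow> complex) \<Rightarrow> bool" where
  "bounded_seq f \<longleftrightarrow> (\<exists>B. \<forall>n\<ge>1. \<forall>i\<in>{0,1}. cmod (f n i) \<le> B)"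

definition norm_m :: "(nat \<Rightarrow> nat \<Rightarrow> complex) \<Rightarrow> real" where
  "norm_m f = (SUP ni \<in> {1..} \<times> {0,1}. cmod (f (fst ni) (snd ni)))"

definition in_l2 :: "(nat \<Rightarrow> nat \<Rightarrow> complex) \<Rightarrow> bool" where
  "in_l2 g \<longleftrightarrow> summable (\<lambda>n. \<Sum>i\<in>{0,1}. (cmod (g (Suc n) i))\<^sup>2)"

definition norm_l2 :: "(nat \<Rightarrow> nat \<Rightarrow> complex) \<Rightarrow> real" where
  "norm_l2 g = sqrt (\<Sum>n. \<Sum>i\<in>{0::nat,1}. (cmod (g (Suc n) i))\<^sup>2)"

end

theory Submission
  imports Defs
begin

(* The (n,i) entry of Q(x) T^-1 f is the integral over [0,x] of cos(\<rho>\<^sub>n\<^sub>i t) G(t), where G is the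
   sum over k of the column integrands qt_column k.  Two estimates combine.

   Rows: Bessel's inequality for the orthogonal system cos(m t) on [0,pi] bounds the sum over n of the
   squared entries by a constant times the L2 norm of G on [0,pi].  For the model rows this works
   because n - p - 1 is an integer taking each value at most p + 2 times; passing to the perturbed rows
   changes cos(\<rho>\<^sub>n t) by O(\<xi>\<^sub>n) uniformly on [0,pi], and the \<xi>\<^sub>n are square summable.

   Columns: for every finite block K of columns, the L2 norm of the partial sum G_K is at most
   C ||f|| (sum of \<xi>\<^sub>k^2 over K)^(1/2).  The first p + 1 columns are O(\<xi>\<^sub>k) pointwise; every later
   column equals \<beta>\<^sub>k cos(m t) + \<gamma>\<^sub>k t sin(m t) + O(\<xi>\<^sub>k^2) with m = k - p - 1 and
   \<beta>\<^sub>k, \<gamma>\<^sub>k = O(\<xi>\<^sub>k ||f||), so Parseval for the cosine and sine systems applies.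

   Applied to tails of columns this gives convergence of every row by the Cauchy criterion, and
   applied to initial segments it gives the l2 bound. *)

lemma norm_cos_le_exp_abs_Im: "cmod (cos b) \<le> exp \<bar>Im b\<bar>"
  using cmod_cos_le_exp[of 1 b] by simp

lemma norm_cos_add_sub_le:
  fixes y :: real and b :: complex
  assumes "\<bar>Im b\<bar> \<le> B"
  shows "cmod (cos (of_real y + b) - cos (of_real y)) \<le> 2 * exp B * cmod b"
proof -
  have eB: "exp \<bar>Im b\<bar> \<le> exp B" using assms by simp
  have eBb: "exp \<bar>Im b\<bar> * cmod b \<le> exp B * cmod b"
    using eB by (intro mult_right_mono) auto
  have cos1: "cmod (cos b - 1) \<le> exp B * cmod b"
    using Taylor_cos[of b 0] eBb by simp
  have sin1: "cmod (sin b) \<le> exp B * cmod b"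
    using Taylor_sin[of b 0] eBb by simp
  have "cos (of_real y + b) - cos (of_real y) = cos (of_real y) * (cos b - 1) - sin (of_real y) * sin b"
    by (simp add: cos_add algebra_simps)
  also have "cmod \<dots> \<le> cmod (cos (of_real y::complex)) * cmod (cos b - 1)
                         + cmod (sin (of_real y::complex)) * cmod (sin b)"
    by (metis norm_mult norm_triangle_ineq4)
  also have "\<dots> \<le> 1 * (exp B * cmod b) + 1 * (exp B * cmod b)"
    by (intro add_mono mult_mono cos1 sin1)
      (simp_all only: cos_of_real sin_of_real norm_of_real abs_cos_le_one abs_sin_le_one norm_ge_zero)
  finally show ?thesis by (simp add: mult_ac)
qed

lemma norm_cos_add_sub_taylor_le:
  fixes y :: real and b :: complex
  assumes "\<bar>Im b\<bar> \<le> B"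
  shows "cmod (cos (of_real y + b) - cos (of_real y) + b * sin (of_real y)) \<le> 2 * exp B * cmod b ^ 2"
proof -
  have eB: "exp \<bar>Im b\<bar> \<le> exp B" using assms by simp
  have eBb: "exp \<bar>Im b\<bar> * cmod b ^ 2 \<le> exp B * cmod b ^ 2"
    using eB by (intro mult_right_mono) auto
  have cos2: "cmod (cos b - 1) \<le> exp B * cmod b ^ 2"
    using Taylor_cos[of b 1] eBb by (simp add: cos_coeff_def power2_eq_square)
  have sin2: "cmod (sin b - b) \<le> exp B * cmod b ^ 2"
    using Taylor_sin[of b 1] eBb by (simp add: sin_coeff_def power2_eq_square)
  have "cos (of_real y + b) - cos (of_real y) + b * sin (of_real y)
      = cos (of_real y) * (cos b - 1) - sin (of_real y) * (sin b - b)"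
    by (simp add: cos_add algebra_simps)
  also have "cmod \<dots> \<le> cmod (cos (of_real y::complex)) * cmod (cos b - 1)
                         + cmod (sin (of_real y::complex)) * cmod (sin b - b)"
    by (metis norm_mult norm_triangle_ineq4)
  also have "\<dots> \<le> 1 * (exp B * cmod b ^ 2) + 1 * (exp B * cmod b ^ 2)"
    by (intro add_mono mult_mono cos2 sin2)
      (simp_all only: cos_of_real sin_of_real norm_of_real abs_cos_le_one abs_sin_le_one norm_ge_zero)
  finally show ?thesis by simp
qed

section \<open>Orthogonal families on [0, pi]\<close>

lemma has_integral_cos_int_mult_0_pi:
  fixes j :: int assumes "j \<noteq> 0"
  shows "((\<lambda>t. cos (real_of_int j * t)) has_integral 0) {0..pi}"
proof -
  have "((\<lambda>t. cos (real_of_int j * t)) has_integral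
          (sin (real_of_int j * pi) / j - sin (real_of_int j * 0) / j)) {0..pi}"
  proof (rule fundamental_theorem_of_calculus)
    fix t assume "t \<in> {0..pi}"
    show "((\<lambda>t. sin (real_of_int j * t) / j) has_vector_derivative cos (real_of_int j * t))
            (at t within {0..pi})"
      using assms by (auto intro!: derivative_eq_intros
          simp: has_real_derivative_iff_has_vector_derivative[symmetric])
  qed simp
  moreover have "sin (real_of_int j * pi) = 0" by (simp add: sin_zero_iff_int2)
  ultimately show ?thesis by simp
qed

lemma integral_cos_mult_cos_0_pi:
  fixes m m' :: nat assumes "m \<noteq> m'"
  shows "integral {0..pi} (\<lambda>t. cos (real m * t) * cos (real m' * t)) = 0"
proof -
  have eq: "cos (real m * t) * cos (real m' * t)
     = cos (real_of_int (int m - int m') * t) / 2 + cos (real_of_int (int m + int m') * t) / 2" for t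
    by (simp add: cos_times_cos algebra_simps add_divide_distrib)
  have "((\<lambda>t. cos (real_of_int (int m - int m') * t) / 2 + cos (real_of_int (int m + int m') * t) / 2)
          has_integral (0/2 + 0/2)) {0..pi}"
    using assms by (intro has_integral_add has_integral_divide has_integral_cos_int_mult_0_pi) auto
  then show ?thesis unfolding eq by (simp add: integral_unique)
qed

lemma integral_sin_mult_sin_0_pi:
  fixes m m' :: nat assumes "m \<noteq> m'"
  shows "integral {0..pi} (\<lambda>t. sin (real m * t) * sin (real m' * t)) = 0"
proof -
  have eq: "sin (real m * t) * sin (real m' * t)
     = cos (real_of_int (int m - int m') * t) / 2 - cos (real_of_int (int m + int m') * t) / 2" for t
    by (simp add: sin_times_sin algebra_simps diff_divide_distrib)
  have "((\<lambda>t. cos (real_of_int (int m - int m') * t) / 2 - cos (real_of_int (int m + int m') * t) / 2)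
          has_integral (0/2 - 0/2)) {0..pi}"
    using assms by (intro has_integral_diff has_integral_divide has_integral_cos_int_mult_0_pi) auto
  then show ?thesis unfolding eq by (simp add: integral_unique)
qed

locale orthogonal_family_0_pi =
  fixes e :: "nat \<Rightarrow> real \<Rightarrow> real"
  assumes continuous_e: "\<And>m. continuous_on UNIV (e m)"
    and abs_e_le_1: "\<And>m t. \<bar>e m t\<bar> \<le> 1"
    and integral_e_orthogonal: "\<And>m m'. m \<noteq> m' \<Longrightarrow> integral {0..pi} (\<lambda>t. e m t * e m' t) = 0"
begin

lemma integral_e_sq_le: "integral {0..pi} (\<lambda>t. e m t * e m t) \<le> pi"
proof -
  have "integral {0..pi} (\<lambda>t. e m t * e m t) \<le> integral {0..pi} (\<lambda>t. 1::real)"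
  proof (rule integral_le)
    show "(\<lambda>t. e m t * e m t) integrable_on {0..pi}" "(\<lambda>t. 1::real) integrable_on {0..pi}"
      by (intro integrable_continuous_interval continuous_intros continuous_on_subset[OF continuous_e]; simp)+
    show "e m t * e m t \<le> 1" for t
      using abs_e_le_1[of m t] by (metis abs_le_square_iff abs_one power2_eq_square one_power2)
  qed
  then show ?thesis by simp
qed

lemma integral_combination_sq_le:
  fixes \<phi> :: "'k \<Rightarrow> nat" and a :: "'k \<Rightarrow> real"
  assumes K: "finite K" and \<phi>: "inj_on \<phi> K"
  shows "integral {0..pi} (\<lambda>t. (\<Sum>k\<in>K. a k * e (\<phi> k) t)^2) \<le> pi * (\<Sum>k\<in>K. (a k)^2)"
proof -
  let ?I = "\<lambda>k k'. integral {0..pi} (\<lambda>t. e (\<phi> k) t * e (\<phi> k') t)"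
  have integrable: "(\<lambda>t. c * (e (\<phi> k) t * e (\<phi> k') t)) integrable_on {0..pi}" for c k k'
    by (intro integrable_continuous_interval continuous_intros continuous_on_subset[OF continuous_e]) auto
  have "(\<Sum>k\<in>K. a k * e (\<phi> k) t)^2 = (\<Sum>k\<in>K. \<Sum>k'\<in>K. a k * a k' * (e (\<phi> k) t * e (\<phi> k') t))" for t
    by (simp add: power2_eq_square sum_product mult_ac)
  then have "integral {0..pi} (\<lambda>t. (\<Sum>k\<in>K. a k * e (\<phi> k) t)^2) = (\<Sum>k\<in>K. \<Sum>k'\<in>K. a k * a k' * ?I k k')"
    using K integrable by (simp add: integral_sum integrable_sum)
  also have "\<dots> = (\<Sum>k\<in>K. (a k)^2 * ?I k k)"
  proof (intro sum.cong refl)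
    fix k assume k: "k \<in> K"
    have "?I k k' = 0" if "k' \<in> K - {k}" for k'
      using that k \<phi> integral_e_orthogonal[of "\<phi> k" "\<phi> k'"] by (auto simp: inj_on_def)
    then have "(\<Sum>k'\<in>K - {k}. a k * a k' * ?I k k') = 0"
      by (intro sum.neutral) simp
    then have "(\<Sum>k'\<in>K. a k * a k' * ?I k k') = a k * a k * ?I k k"
      by (simp add: sum.remove[OF K k])
    then show "(\<Sum>k'\<in>K. a k * a k' * ?I k k') = (a k)^2 * ?I k k"
      by (simp add: power2_eq_square)
  qed
  also have "\<dots> \<le> (\<Sum>k\<in>K. (a k)^2 * pi)"
    by (intro sum_mono mult_left_mono integral_e_sq_le) auto
  finally show ?thesis by (simp add: sum_distrib_left mult_ac)
qed

lemma bessel_inequality: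
  fixes u :: "real \<Rightarrow> real"
  assumes x: "0 \<le> x" "x \<le> pi" and u: "continuous_on {0..x} u" and M: "finite M"
  shows "(\<Sum>m\<in>M. (integral {0..x} (\<lambda>t. u t * e m t))^2) \<le> pi * integral {0..x} (\<lambda>t. (u t)^2)"
proof -
  define A where "A m = integral {0..x} (\<lambda>t. u t * e m t)" for m
  define g where "g t = (\<Sum>m\<in>M. A m * e m t)" for t
  define S where "S = (\<Sum>m\<in>M. (A m)^2)"
  have contg: "continuous_on UNIV g" unfolding g_def
    by (intro continuous_intros continuous_e)
  have ug: "integral {0..x} (\<lambda>t. u t * g t) = S"
  proof -
    have "integral {0..x} (\<lambda>t. u t * g t) = integral {0..x} (\<lambda>t. \<Sum>m\<in>M. A m * (u t * e m t))"
      unfolding g_def by (simp add: sum_distrib_left mult_ac)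
    also have "\<dots> = (\<Sum>m\<in>M. A m * A m)"
      by (subst integral_sum) (auto intro!: integrable_continuous_interval continuous_intros u
          continuous_on_subset[OF continuous_e] M simp: A_def)
    finally show ?thesis by (simp add: S_def power2_eq_square)
  qed
  have gg: "integral {0..x} (\<lambda>t. (g t)^2) \<le> pi * S"
  proof -
    have "integral {0..x} (\<lambda>t. (g t)^2) \<le> integral {0..pi} (\<lambda>t. (g t)^2)"
      using x by (intro integral_subset_le integrable_continuous_interval continuous_intros
          continuous_on_subset[OF contg]) auto
    also have "\<dots> \<le> pi * S"
      unfolding g_def S_def using integral_combination_sq_le[of M "\<lambda>m. m" A] M by simp
    finally show ?thesis .
  qed
  have "0 \<le> integral {0..x} (\<lambda>t. (u t - g t / pi)^2)"
    by (rule integral_nonneg)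
      (auto intro!: integrable_continuous_interval continuous_intros u continuous_on_subset[OF contg])
  also have "\<dots> = integral {0..x} (\<lambda>t. (u t)^2) - 2 / pi * integral {0..x} (\<lambda>t. u t * g t)
        + integral {0..x} (\<lambda>t. (g t)^2) / pi^2"
  proof -
    have eq: "(u t - g t / pi)^2 = (u t)^2 - 2 / pi * (u t * g t) + (g t)^2 / pi^2" for t
      by (simp add: power2_eq_square field_simps)
    have "(\<lambda>t. (u t)^2) integrable_on {0..x}" "(\<lambda>t. u t * g t) integrable_on {0..x}"
      "(\<lambda>t. (g t)^2) integrable_on {0..x}"
      by (intro integrable_continuous_interval continuous_intros u continuous_on_subset[OF contg]; simp)+
    then show ?thesis unfolding eq
      by (simp add: integral_add integral_diff integral_mult_right integral_divide integrable_diff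
          integrable_add integrable_on_cmult_left integrable_on_divide)
  qed
  also have "\<dots> \<le> integral {0..x} (\<lambda>t. (u t)^2) - 2 / pi * S + pi * S / pi^2"
    unfolding ug by (intro add_mono divide_right_mono gg) auto
  finally have "0 \<le> integral {0..x} (\<lambda>t. (u t)^2) - S / pi"
    by (simp add: power2_eq_square field_simps)
  then show ?thesis unfolding S_def A_def by (simp add: field_simps)
qed

lemma integral_norm_combination_sq_le:
  fixes \<phi> :: "'k \<Rightarrow> nat" and b :: "'k \<Rightarrow> complex"
  assumes "finite K" "inj_on \<phi> K"
  shows "integral {0..pi} (\<lambda>t. (cmod (\<Sum>k\<in>K. b k * of_real (e (\<phi> k) t)))^2) \<le> pi * (\<Sum>k\<in>K. (cmod (b k))^2)"
proof -
  have eq: "(cmod (\<Sum>k\<in>K. b k * of_real (e (\<phi> k) t)))^2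
     = (\<Sum>k\<in>K. Re (b k) * e (\<phi> k) t)^2 + (\<Sum>k\<in>K. Im (b k) * e (\<phi> k) t)^2" for t
    by (simp add: cmod_power2 Re_sum Im_sum)
  have i: "(\<lambda>t. (\<Sum>k\<in>K. c k * e (\<phi> k) t)^2) integrable_on {0..pi}" for c
    by (intro integrable_continuous_interval continuous_intros continuous_on_subset[OF continuous_e]) auto
  have "integral {0..pi} (\<lambda>t. (cmod (\<Sum>k\<in>K. b k * of_real (e (\<phi> k) t)))^2)
     = integral {0..pi} (\<lambda>t. (\<Sum>k\<in>K. Re (b k) * e (\<phi> k) t)^2)
       + integral {0..pi} (\<lambda>t. (\<Sum>k\<in>K. Im (b k) * e (\<phi> k) t)^2)"
    unfolding eq by (rule integral_add[OF i i])
  also have "\<dots> \<le> pi * (\<Sum>k\<in>K. (Re (b k))^2) + pi * (\<Sum>k\<in>K. (Im (b k))^2)"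
    by (intro add_mono integral_combination_sq_le assms)
  finally show ?thesis by (simp add: cmod_power2 sum.distrib distrib_left)
qed

lemma bessel_inequality_complex:
  fixes G :: "real \<Rightarrow> complex"
  assumes x: "0 \<le> x" "x \<le> pi" and G: "continuous_on {0..x} G" and M: "finite M"
  shows "(\<Sum>m\<in>M. (cmod (integral {0..x} (\<lambda>t. of_real (e m t) * G t)))^2)
           \<le> pi * integral {0..x} (\<lambda>t. (cmod (G t))^2)"
proof -
  have Re_Im: "Re (integral {0..x} (\<lambda>t. of_real (e m t) * G t)) = integral {0..x} (\<lambda>t. Re (G t) * e m t)"
    "Im (integral {0..x} (\<lambda>t. of_real (e m t) * G t)) = integral {0..x} (\<lambda>t. Im (G t) * e m t)" for m
  proof -
    have "(\<lambda>t. of_real (e m t) * G t) integrable_on {0..x}"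
      by (intro integrable_continuous_interval continuous_intros G continuous_on_subset[OF continuous_e]) auto
    then have h: "((\<lambda>t. of_real (e m t) * G t) has_integral
                     integral {0..x} (\<lambda>t. of_real (e m t) * G t)) {0..x}"
      by (rule integrable_integral)
    show "Re (integral {0..x} (\<lambda>t. of_real (e m t) * G t)) = integral {0..x} (\<lambda>t. Re (G t) * e m t)"
      using has_integral_Re[OF h] by (simp add: integral_unique mult.commute)
    show "Im (integral {0..x} (\<lambda>t. of_real (e m t) * G t)) = integral {0..x} (\<lambda>t. Im (G t) * e m t)"
      using has_integral_Im[OF h] by (simp add: integral_unique mult.commute)
  qed
  have "(\<Sum>m\<in>M. (cmod (integral {0..x} (\<lambda>t. of_real (e m t) * G t)))^2)
     = (\<Sum>m\<in>M. (integral {0..x} (\<lambda>t. Re (G t) * e m t))^2)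
       + (\<Sum>m\<in>M. (integral {0..x} (\<lambda>t. Im (G t) * e m t))^2)"
    by (simp add: cmod_power2 Re_Im sum.distrib)
  also have "\<dots> \<le> pi * integral {0..x} (\<lambda>t. (Re (G t))^2) + pi * integral {0..x} (\<lambda>t. (Im (G t))^2)"
    by (intro add_mono bessel_inequality x M continuous_intros G)
  also have "\<dots> = pi * integral {0..x} (\<lambda>t. (cmod (G t))^2)"
    by (simp add: cmod_power2 distrib_left integral_add integrable_continuous_interval continuous_intros G)
  finally show ?thesis .
qed

end

interpretation cos_family: orthogonal_family_0_pi "\<lambda>m t. cos (real m * t)"
  by unfold_locales (auto intro!: continuous_intros integral_cos_mult_cos_0_pi)

interpretation sin_family: orthogonal_family_0_pi "\<lambda>m t. sin (real m * t)"
  by unfold_locales (auto intro!: continuous_intros integral_sin_mult_sin_0_pi)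

text \<open>Cauchy-Schwarz, as Bessel's inequality for the single function cos (0 * t) = 1.\<close>
lemma integral_abs_sq_le:
  fixes v :: "real \<Rightarrow> real"
  assumes "0 \<le> x" "x \<le> pi" and "continuous_on {0..x} v"
  shows "(integral {0..x} (\<lambda>t. \<bar>v t\<bar>))^2 \<le> pi * integral {0..x} (\<lambda>t. (v t)^2)"
  using cos_family.bessel_inequality[of x "\<lambda>t. \<bar>v t\<bar>" "{0}"] assms by (simp add: continuous_intros)

lemma power2_add_le: "(a + b)^2 \<le> 2 * a^2 + 2 * (b::real)^2"
  using sum_squares_bound[of a b] by (simp add: power2_sum)

lemma power2_add3_le: "(a + b + c)^2 \<le> 3 * (a^2 + b^2 + (c::real)^2)"
proof -
  have "0 \<le> (a-b)^2 + (a-c)^2 + (b-c)^2" by simp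
  then show ?thesis by (simp add: power2_eq_square algebra_simps)
qed

lemma integral_norm_add_sq_le:
  fixes g h :: "real \<Rightarrow> 'a::euclidean_space"
  assumes g: "continuous_on {a..b} g" and h: "continuous_on {a..b} h"
  shows "integral {a..b} (\<lambda>t. (norm (g t + h t))^2)
           \<le> 2 * integral {a..b} (\<lambda>t. (norm (g t))^2) + 2 * integral {a..b} (\<lambda>t. (norm (h t))^2)"
proof -
  have int: "(\<lambda>t. (norm (g t))^2) integrable_on {a..b}" "(\<lambda>t. (norm (h t))^2) integrable_on {a..b}"
    "(\<lambda>t. (norm (g t + h t))^2) integrable_on {a..b}"
    by (intro integrable_continuous_interval continuous_intros g h)+
  have "(norm (g t + h t))^2 \<le> 2 * (norm (g t))^2 + 2 * (norm (h t))^2" for t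
    by (rule order_trans[OF power_mono[OF norm_triangle_ineq] power2_add_le]) simp
  then have "integral {a..b} (\<lambda>t. (norm (g t + h t))^2)
      \<le> integral {a..b} (\<lambda>t. 2 * (norm (g t))^2 + 2 * (norm (h t))^2)"
    using int by (intro integral_le integrable_add integrable_on_cmult_left) auto
  also have "\<dots> = 2 * integral {a..b} (\<lambda>t. (norm (g t))^2) + 2 * integral {a..b} (\<lambda>t. (norm (h t))^2)"
    using int by (simp add: integral_add integrable_on_cmult_left)
  finally show ?thesis .
qed

lemma sum_shifted_index_le:
  fixes g :: "nat \<Rightarrow> real"
  assumes g: "\<And>m. 0 \<le> g m"
  shows "(\<Sum>n\<in>{1..M}. g (n - (p + 1))) \<le> (real p + 2) * (\<Sum>m\<in>{0..M}. g m)"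
proof -
  define A where "A = {n\<in>{1..M}. n \<le> p + 1}"
  define B where "B = {n\<in>{1..M}. p + 1 < n}"
  have S: "g m \<le> (\<Sum>m\<in>{0..M}. g m)" "0 \<le> (\<Sum>m\<in>{0..M}. g m)" if "m \<le> M" for m
    using that g by (auto intro: member_le_sum sum_nonneg)
  have "(\<Sum>n\<in>A. g (n - (p + 1))) = real (card A) * g 0"
    by (simp add: A_def)
  also have "\<dots> \<le> (real p + 1) * (\<Sum>m\<in>{0..M}. g m)"
  proof (intro mult_mono)
    have "card A \<le> card {1..p+1}" by (intro card_mono) (auto simp: A_def)
    then show "real (card A) \<le> real p + 1" by simp
  qed (use S g in auto)
  finally have a: "(\<Sum>n\<in>A. g (n - (p + 1))) \<le> (real p + 1) * (\<Sum>m\<in>{0..M}. g m)" .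
  have "(\<Sum>n\<in>B. g (n - (p + 1))) = (\<Sum>m\<in>(\<lambda>n. n - (p + 1)) ` B. g m)"
    by (subst sum.reindex) (auto simp: B_def inj_on_def)
  also have "\<dots> \<le> (\<Sum>m\<in>{0..M}. g m)"
    by (intro sum_mono2 g) (auto simp: B_def)
  finally have b: "(\<Sum>n\<in>B. g (n - (p + 1))) \<le> (\<Sum>m\<in>{0..M}. g m)" .
  have "{1..M} = A \<union> B" "A \<inter> B = {}" "finite A" "finite B" by (auto simp: A_def B_def)
  then have "(\<Sum>n\<in>{1..M}. g (n - (p + 1))) = (\<Sum>n\<in>A. g (n - (p + 1))) + (\<Sum>n\<in>B. g (n - (p + 1)))"
    by (simp add: sum.union_disjoint)
  with a b show ?thesis by (simp add: algebra_simps)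
qed

lemma summable_if_sq_block_bound:
  fixes b :: "nat \<Rightarrow> 'a::banach"
  assumes a: "summable a" "\<And>k. 0 \<le> a k" and Q: "0 \<le> Q"
    and block: "\<And>m n. (norm (\<Sum>k\<in>{m..<n}. b k))^2 \<le> Q * (\<Sum>k\<in>{m..<n}. a k)"
  shows "summable b"
  unfolding summable_Cauchy
proof (intro allI impI)
  fix e :: real assume e: "e > 0"
  then obtain N where N: "\<And>m n. m \<ge> N \<Longrightarrow> norm (\<Sum>k\<in>{m..<n}. a k) < e^2 / (Q + 1)"
    using a(1)[unfolded summable_Cauchy, rule_format, of "e^2 / (Q + 1)"] Q by auto
  have "norm (\<Sum>k\<in>{m..<n}. b k) < e" if "m \<ge> N" for m n
  proof -
    have "(\<Sum>k\<in>{m..<n}. a k) < e^2 / (Q + 1)"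
      using N[OF that, of n] a(2) by (simp add: sum_nonneg)
    then have "(norm (\<Sum>k\<in>{m..<n}. b k))^2 \<le> Q * (e^2 / (Q + 1))"
      using block[of m n] Q by (meson less_imp_le mult_left_mono order_trans)
    also have "\<dots> < e^2" using e Q by (simp add: field_simps)
    finally show ?thesis using e by (simp add: power_less_imp_less_base)
  qed
  then show "\<exists>N. \<forall>m\<ge>N. \<forall>n. norm (\<Sum>k\<in>{m..<n}. b k) < e" by blast
qed

section \<open>The entries of the operator as integrals\<close>

definition rhoj :: "nat \<Rightarrow> (nat \<Rightarrow> complex) \<Rightarrow> nat \<Rightarrow> nat \<Rightarrow> complex" where
  "rhoj p lam n j = (if j = 0 then rho lam n else of_real (rho_t p n))"

definition qt_column :: "nat \<Rightarrow> (nat \<Rightarrow> complex) \<Rightarrow> (nat \<Rightarrow> complex) \<Rightarrow> (nat \<Rightarrow> nat \<Rightarrow> complex)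
                          \<Rightarrow> nat \<Rightarrow> real \<Rightarrow> complex" where
  "qt_column p lam al f k t = al k * cos (rho lam k * of_real t) * (rho_hat p lam k * f k 0 + f k 1)
      - of_real (alpha_t p k) * cos (of_real (rho_t p k * t)) * f k 1"

text \<open>The chosen branch sqrt_branch differs from csqrt at most by a sign, which cos does not see.\<close>
lemma cos_csqrt_lamj: "cos (csqrt (lamj p lam n j) * z) = cos (rhoj p lam n j * z)"
proof (cases "j = 0")
  case True
  then show ?thesis by (simp add: lamj_def rhoj_def rho_def sqrt_branch_def)
next
  case False
  have "csqrt (of_real ((rho_t p n)\<^sup>2)) = of_real (rho_t p n)"
    by (simp add: csqrt_of_real rho_t_def)
  with False show ?thesis by (simp add: lamj_def rhoj_def del: of_real_power)
qed

lemma continuous_on_qt_column: "continuous_on A (qt_column p lam al f k)"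
  unfolding qt_column_def by (intro continuous_intros)

lemma QT_term_eq_integral:
  "QT_term p lam al x f n i k
     = integral {0..x} (\<lambda>t. cos (rhoj p lam n i * of_real t) * qt_column p lam al f k t)"
proof -
  let ?c = "\<lambda>t. cos (rhoj p lam n i * of_real t)"
  have D0: "Dt x (lamj p lam n i) (lamj p lam k 0)
              = integral {0..x} (\<lambda>t. ?c t * cos (rho lam k * of_real t))"
    and D1: "Dt x (lamj p lam n i) (lamj p lam k 1)
              = integral {0..x} (\<lambda>t. ?c t * cos (of_real (rho_t p k * t)))"
    unfolding Dt_def cos_csqrt_lamj by (simp_all add: rhoj_def)
  let ?a = "\<lambda>t. al k * (?c t * cos (rho lam k * of_real t)) * (rho_hat p lam k * f k 0 + f k 1)"
  let ?b = "\<lambda>t. of_real (alpha_t p k) * (?c t * cos (of_real (rho_t p k * t))) * f k 1"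
  have "QT_term p lam al x f n i k = integral {0..x} ?a - integral {0..x} ?b"
    unfolding QT_term_def Qt_def D0 D1 by (simp add: alj_def)
  also have "\<dots> = integral {0..x} (\<lambda>t. ?a t - ?b t)"
    by (rule integral_diff[symmetric]) (intro integrable_continuous_interval continuous_intros)+
  also have "\<dots> = integral {0..x} (\<lambda>t. ?c t * qt_column p lam al f k t)"
    unfolding qt_column_def by (simp add: algebra_simps)
  finally show ?thesis .
qed

lemma sum_QT_term_eq_integral:
  assumes "finite K"
  shows "(\<Sum>k\<in>K. QT_term p lam al x f n i k)
           = integral {0..x} (\<lambda>t. cos (rhoj p lam n i * of_real t) * (\<Sum>k\<in>K. qt_column p lam al f k t))"
  unfolding QT_term_eq_integral sum_distrib_left using assms
  by (intro integral_sum[symmetric] integrable_continuous_interval continuous_intros continuous_on_qt_column)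

lemma norm_le_norm_m:
  assumes "bounded_seq f" "1 \<le> n" "i \<in> {0,1}"
  shows "cmod (f n i) \<le> norm_m f"
proof -
  obtain B where "\<forall>n\<ge>1. \<forall>i\<in>{0,1}. cmod (f n i) \<le> B"
    using assms(1) unfolding bounded_seq_def by auto
  then have "bdd_above ((\<lambda>ni. cmod (f (fst ni) (snd ni))) ` ({1..} \<times> {0,1}))"
    by (intro bdd_aboveI[of _ B]) auto
  moreover have "(n, i) \<in> {1..} \<times> {0,1}" using assms by auto
  ultimately show ?thesis unfolding norm_m_def
    by (metis (no_types, lifting) cSUP_upper fst_conv snd_conv)
qed

lemma norm_m_nonneg: "bounded_seq f \<Longrightarrow> 0 \<le> norm_m f"
  using norm_le_norm_m[of f 1 0] by (force intro: order_trans[OF norm_ge_zero])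

lemma abs_alpha_t_le: "\<bar>alpha_t p k\<bar> \<le> 2 / pi"
  unfolding alpha_t_def by (auto simp: field_simps)

lemma integral_cos_rho_t_combination_le:
  assumes "finite K" "K \<subseteq> {p+1..}"
  shows "integral {0..pi} (\<lambda>t. (cmod (\<Sum>k\<in>K. c k * cos (of_real (rho_t p k * t))))^2)
           \<le> pi * (\<Sum>k\<in>K. (cmod (c k))^2)"
proof -
  have "inj_on (\<lambda>k. k - (p + 1)) K" using assms(2) by (intro inj_on_diff_nat) auto
  then show ?thesis
    using cos_family.integral_norm_combination_sq_le[OF assms(1), of "\<lambda>k. k - (p + 1)" c]
    by (simp add: rho_t_def flip: cos_of_real)
qed

lemma integral_sin_rho_t_combination_le:
  assumes "finite K" "K \<subseteq> {p+1..}"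
  shows "integral {0..pi} (\<lambda>t. (cmod (\<Sum>k\<in>K. c k * sin (of_real (rho_t p k * t))))^2)
           \<le> pi * (\<Sum>k\<in>K. (cmod (c k))^2)"
proof -
  have "inj_on (\<lambda>k. k - (p + 1)) K" using assms(2) by (intro inj_on_diff_nat) auto
  then show ?thesis
    using sin_family.integral_norm_combination_sq_le[OF assms(1), of "\<lambda>k. k - (p + 1)" c]
    by (simp add: rho_t_def flip: sin_of_real)
qed

lemma sum_sq_model_rows_le:
  fixes G :: "real \<Rightarrow> complex"
  assumes "0 \<le> x" "x \<le> pi" "continuous_on {0..x} G"
  shows "(\<Sum>n\<in>{1..M}. (cmod (integral {0..x} (\<lambda>t. cos (of_real (rho_t p n * t)) * G t)))^2)
           \<le> (real p + 2) * (pi * integral {0..x} (\<lambda>t. (cmod (G t))^2))"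
proof -
  define g where "g m = (cmod (integral {0..x} (\<lambda>t. of_real (cos (real m * t)) * G t)))^2" for m
  have "(\<Sum>n\<in>{1..M}. (cmod (integral {0..x} (\<lambda>t. cos (of_real (rho_t p n * t)) * G t)))^2)
      = (\<Sum>n\<in>{1..M}. g (n - (p + 1)))"
    by (simp add: g_def rho_t_def flip: cos_of_real)
  also have "\<dots> \<le> (real p + 2) * (\<Sum>m\<in>{0..M}. g m)"
    by (rule sum_shifted_index_le) (simp add: g_def)
  also have "\<dots> \<le> (real p + 2) * (pi * integral {0..x} (\<lambda>t. (cmod (G t))^2))"
    unfolding g_def using cos_family.bessel_inequality_complex[OF assms, of "{0..M}"]
    by (intro mult_left_mono) auto
  finally show ?thesis .
qed

section \<open>Estimates on the ball\<close>

definition cos_growth :: "real \<Rightarrow> real" where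
  "cos_growth \<Omega> = exp (\<Omega> * pi)"

definition alpha_bound :: "real \<Rightarrow> real" where
  "alpha_bound \<Omega> = 2 / pi + \<Omega>"

definition row_const :: "nat \<Rightarrow> real \<Rightarrow> real" where
  "row_const p \<Omega> = 2 * (real p + 2) * pi + 8 * (cos_growth \<Omega>)^2 * pi^3 * \<Omega>^2"

lemma row_const_nonneg [simp]: "0 \<le> row_const p \<Omega>"
  by (simp add: row_const_def)

lemma cos_growth_pos: "0 < cos_growth \<Omega>"
  by (simp add: cos_growth_def)

lemmas cos_growth_nonneg [simp] = less_imp_le[OF cos_growth_pos]

locale in_ball =
  fixes p :: nat and \<Omega> :: real and lam al :: "nat \<Rightarrow> complex"
  assumes Omega_pos: "0 < \<Omega>" and in_B: "in_B p \<Omega> lam al"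
begin

lemma alpha_bound_pos: "0 < alpha_bound \<Omega>"
  using Omega_pos by (simp add: alpha_bound_def add_pos_pos)

lemmas alpha_bound_nonneg [simp] = less_imp_le[OF alpha_bound_pos]

lemma xi_nonneg [simp]: "0 \<le> xi p lam al k"
  unfolding xi_def by simp

lemma norm_rho_hat_le_xi: "cmod (rho_hat p lam k) \<le> xi p lam al k"
  unfolding xi_def rho_hat_def by simp

lemma norm_al_diff_le_xi: "cmod (al k - of_real (alpha_t p k)) \<le> xi p lam al k"
  unfolding xi_def by simp

lemma summable_xi_sq: "summable (\<lambda>k. (xi p lam al (Suc k))\<^sup>2)"
  using in_B unfolding in_B_def by auto

lemma sum_xi_sq_le:
  assumes "finite K" "K \<subseteq> {1..}"
  shows "(\<Sum>k\<in>K. (xi p lam al k)^2) \<le> \<Omega>^2"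
proof -
  have "sqrt (\<Sum>n. (xi p lam al (Suc n))\<^sup>2) \<le> \<Omega>"
    using in_B unfolding in_B_def by auto
  then have total: "(\<Sum>n. (xi p lam al (Suc n))\<^sup>2) \<le> \<Omega>^2"
    by (rule sqrt_le_D)
  have "(\<Sum>k\<in>K. (xi p lam al k)^2) = (\<Sum>k\<in>(\<lambda>k. k - 1) ` K. (xi p lam al (Suc k))^2)"
    by (rule sum.reindex_bij_witness[of _ Suc "\<lambda>k. k - 1"]) (use assms(2) in auto)
  also have "\<dots> \<le> (\<Sum>n. (xi p lam al (Suc n))\<^sup>2)"
    by (rule sum_le_suminf[OF summable_xi_sq]) (auto simp: assms(1))
  finally show ?thesis using total by linarith
qed

lemma xi_le: "1 \<le> k \<Longrightarrow> xi p lam al k \<le> \<Omega>"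
  using sum_xi_sq_le[of "{k}"] Omega_pos by (auto intro: power2_le_imp_le)

lemma norm_al_le:
  assumes "1 \<le> k"
  shows "cmod (al k) \<le> alpha_bound \<Omega>"
proof -
  have "cmod (al k) \<le> cmod (of_real (alpha_t p k) :: complex) + cmod (al k - of_real (alpha_t p k))"
    by (rule norm_triangle_sub)
  also have "\<dots> \<le> 2 / pi + \<Omega>"
    using abs_alpha_t_le[of p k] norm_al_diff_le_xi[of k] xi_le[OF assms] by (intro add_mono) auto
  finally show ?thesis unfolding alpha_bound_def .
qed

lemma norm_rho_hat_mult_le:
  assumes "t \<in> {0..pi}"
  shows "cmod (rho_hat p lam k * of_real t) \<le> xi p lam al k * pi"
proof -
  have "cmod (of_real t :: complex) \<le> pi" using assms by simp
  then show ?thesis unfolding norm_mult by (rule mult_mono[OF norm_rho_hat_le_xi]) auto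
qed

lemma abs_Im_rho_hat_mult_le:
  assumes "t \<in> {0..pi}" "1 \<le> k"
  shows "\<bar>Im (rho_hat p lam k * of_real t)\<bar> \<le> \<Omega> * pi"
proof -
  have "\<bar>Im (rho_hat p lam k * of_real t)\<bar> \<le> xi p lam al k * pi"
    using abs_Im_le_cmod norm_rho_hat_mult_le[OF assms(1)] by (rule order_trans)
  also have "\<dots> \<le> \<Omega> * pi" using xi_le[OF assms(2)] by simp
  finally show ?thesis .
qed

lemma rho_mult_eq: "rho lam k * of_real t = of_real (rho_t p k * t) + rho_hat p lam k * of_real t"
  unfolding rho_hat_def by (simp add: algebra_simps)

lemma norm_cos_rho_le:
  assumes "t \<in> {0..pi}" "1 \<le> k"
  shows "cmod (cos (rho lam k * of_real t)) \<le> cos_growth \<Omega>"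
proof -
  have "\<bar>Im (rho lam k * of_real t)\<bar> = \<bar>Im (rho_hat p lam k * of_real t)\<bar>"
    by (simp add: rho_hat_def)
  then have "exp \<bar>Im (rho lam k * of_real t)\<bar> \<le> cos_growth \<Omega>"
    using abs_Im_rho_hat_mult_le[OF assms] unfolding cos_growth_def by simp
  with norm_cos_le_exp_abs_Im show ?thesis by (rule order_trans)
qed

lemma norm_cos_rho_sub_le:
  assumes "t \<in> {0..pi}" "1 \<le> k"
  shows "cmod (cos (rho lam k * of_real t) - cos (of_real (rho_t p k * t)))
           \<le> 2 * cos_growth \<Omega> * pi * xi p lam al k"
proof -
  have "cmod (cos (rho lam k * of_real t) - cos (of_real (rho_t p k * t)))
     \<le> 2 * cos_growth \<Omega> * cmod (rho_hat p lam k * of_real t)"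
    unfolding rho_mult_eq cos_growth_def
    by (rule norm_cos_add_sub_le[OF abs_Im_rho_hat_mult_le[OF assms]])
  also have "\<dots> \<le> 2 * cos_growth \<Omega> * (xi p lam al k * pi)"
    using norm_rho_hat_mult_le[OF assms(1)] by (intro mult_left_mono) auto
  finally show ?thesis by (simp add: mult_ac)
qed

lemma norm_cos_rho_sub_taylor_le:
  assumes "t \<in> {0..pi}" "1 \<le> k"
  shows "cmod (cos (rho lam k * of_real t) - cos (of_real (rho_t p k * t))
                + rho_hat p lam k * of_real t * sin (of_real (rho_t p k * t)))
           \<le> 2 * cos_growth \<Omega> * pi^2 * (xi p lam al k)^2"
proof -
  have "cmod (cos (rho lam k * of_real t) - cos (of_real (rho_t p k * t))
                + rho_hat p lam k * of_real t * sin (of_real (rho_t p k * t)))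
     \<le> 2 * cos_growth \<Omega> * cmod (rho_hat p lam k * of_real t) ^ 2"
    unfolding rho_mult_eq cos_growth_def
    by (rule norm_cos_add_sub_taylor_le[OF abs_Im_rho_hat_mult_le[OF assms]])
  also have "\<dots> \<le> 2 * cos_growth \<Omega> * (xi p lam al k * pi) ^ 2"
    using norm_rho_hat_mult_le[OF assms(1)] by (intro mult_left_mono power_mono) auto
  finally show ?thesis by (simp add: mult_ac power_mult_distrib)
qed

lemma norm_row_diff_sq_le:
  fixes G :: "real \<Rightarrow> complex"
  assumes x: "0 \<le> x" "x \<le> pi" and G: "continuous_on {0..x} G" and n: "1 \<le> n"
  shows "(cmod (integral {0..x} (\<lambda>t. cos (rho lam n * of_real t) * G t)
                 - integral {0..x} (\<lambda>t. cos (of_real (rho_t p n * t)) * G t)))^2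
           \<le> 4 * (cos_growth \<Omega>)^2 * pi^3 * (xi p lam al n)^2 * integral {0..x} (\<lambda>t. (cmod (G t))^2)"
proof -
  define c where "c = 2 * cos_growth \<Omega> * pi * xi p lam al n"
  have c: "0 \<le> c" by (simp add: c_def cos_growth_def)
  have "integral {0..x} (\<lambda>t. cos (rho lam n * of_real t) * G t)
          - integral {0..x} (\<lambda>t. cos (of_real (rho_t p n * t)) * G t)
      = integral {0..x} (\<lambda>t. (cos (rho lam n * of_real t) - cos (of_real (rho_t p n * t))) * G t)"
    by (subst integral_diff[symmetric])
      (auto intro!: integrable_continuous_interval continuous_intros G simp: algebra_simps)
  also have "cmod \<dots> \<le> integral {0..x} (\<lambda>t. c * cmod (G t))"
  proof (rule integral_norm_bound_integral)
    fix t assume "t \<in> {0..x}"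
    then have "cmod (cos (rho lam n * of_real t) - cos (of_real (rho_t p n * t))) \<le> c"
      unfolding c_def using x n by (intro norm_cos_rho_sub_le) auto
    then show "cmod ((cos (rho lam n * of_real t) - cos (of_real (rho_t p n * t))) * G t)
        \<le> c * cmod (G t)"
      unfolding norm_mult by (intro mult_right_mono) auto
  qed (auto intro!: integrable_continuous_interval continuous_intros G)
  also have "\<dots> = c * integral {0..x} (\<lambda>t. cmod (G t))" by simp
  finally have "(cmod (integral {0..x} (\<lambda>t. cos (rho lam n * of_real t) * G t)
                 - integral {0..x} (\<lambda>t. cos (of_real (rho_t p n * t)) * G t)))^2
      \<le> c^2 * (integral {0..x} (\<lambda>t. cmod (G t)))^2"
    using c by (subst power_mult_distrib[symmetric]) (intro power_mono; simp)
  also have "\<dots> \<le> c^2 * (pi * integral {0..x} (\<lambda>t. (cmod (G t))^2))"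
    using integral_abs_sq_le[OF x, of "\<lambda>t. cmod (G t)"]
    by (intro mult_left_mono) (auto intro!: continuous_intros G)
  finally show ?thesis by (simp add: c_def power_mult_distrib power2_eq_square power3_eq_cube mult_ac)
qed

lemma sum_sq_rows_rho_le:
  fixes G :: "real \<Rightarrow> complex"
  assumes x: "0 \<le> x" "x \<le> pi" and G: "continuous_on {0..x} G"
  shows "(\<Sum>n\<in>{1..M}. (cmod (integral {0..x} (\<lambda>t. cos (rho lam n * of_real t) * G t)))^2)
           \<le> row_const p \<Omega> * integral {0..x} (\<lambda>t. (cmod (G t))^2)"
proof -
  define L where "L = integral {0..x} (\<lambda>t. (cmod (G t))^2)"
  define row0 where "row0 n = integral {0..x} (\<lambda>t. cos (rho lam n * of_real t) * G t)" for n
  define row1 where "row1 n = integral {0..x} (\<lambda>t. cos (of_real (rho_t p n * t)) * G t)" for n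
  have L: "0 \<le> L"
    unfolding L_def by (intro integral_nonneg integrable_continuous_interval continuous_intros G) auto
  have "(cmod (row0 n))^2
      \<le> 2 * (cmod (row1 n))^2 + 2 * (4 * (cos_growth \<Omega>)^2 * pi^3 * (xi p lam al n)^2 * L)"
    if "n \<in> {1..M}" for n
  proof -
    have "(cmod (row0 n))^2 \<le> (cmod (row1 n) + cmod (row0 n - row1 n))^2"
      using norm_triangle_ineq[of "row1 n" "row0 n - row1 n"] by (intro power_mono) auto
    also have "\<dots> \<le> 2 * (cmod (row1 n))^2 + 2 * (cmod (row0 n - row1 n))^2"
      by (rule power2_add_le)
    finally show ?thesis
      using norm_row_diff_sq_le[OF x G, of n] that unfolding row0_def row1_def L_def by simp
  qed
  then have "(\<Sum>n\<in>{1..M}. (cmod (row0 n))^2)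
      \<le> (\<Sum>n\<in>{1..M}. 2 * (cmod (row1 n))^2 + 2 * (4 * (cos_growth \<Omega>)^2 * pi^3 * (xi p lam al n)^2 * L))"
    by (rule sum_mono)
  also have "\<dots> = 2 * (\<Sum>n\<in>{1..M}. (cmod (row1 n))^2)
      + 8 * (cos_growth \<Omega>)^2 * pi^3 * L * (\<Sum>n\<in>{1..M}. (xi p lam al n)^2)"
    by (simp add: sum.distrib sum_distrib_left mult_ac)
  also have "\<dots> \<le> 2 * ((real p + 2) * (pi * L)) + 8 * (cos_growth \<Omega>)^2 * pi^3 * L * \<Omega>^2"
    using sum_sq_model_rows_le[OF x G, of p M] sum_xi_sq_le[of "{1..M}"] L
    unfolding row1_def L_def by (intro add_mono mult_left_mono) auto
  also have "\<dots> = row_const p \<Omega> * L"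
    by (simp add: row_const_def algebra_simps)
  finally show ?thesis unfolding row0_def L_def .
qed

lemma sum_sq_rows_le:
  fixes G :: "real \<Rightarrow> complex"
  assumes x: "0 \<le> x" "x \<le> pi" and G: "continuous_on {0..pi} G"
  shows "(\<Sum>n\<in>{1..M}. (cmod (integral {0..x} (\<lambda>t. cos (rhoj p lam n i * of_real t) * G t)))^2)
           \<le> row_const p \<Omega> * integral {0..pi} (\<lambda>t. (cmod (G t))^2)"
proof -
  define L where "L = integral {0..x} (\<lambda>t. (cmod (G t))^2)"
  have Gx: "continuous_on {0..x} G" by (rule continuous_on_subset[OF G]) (use x in auto)
  have L: "0 \<le> L" "L \<le> integral {0..pi} (\<lambda>t. (cmod (G t))^2)"
    unfolding L_def using x
    by (auto intro!: integral_nonneg integral_subset_le integrable_continuous_interval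
        continuous_intros G Gx)
  have "(\<Sum>n\<in>{1..M}. (cmod (integral {0..x} (\<lambda>t. cos (rhoj p lam n i * of_real t) * G t)))^2)
          \<le> row_const p \<Omega> * L"
  proof (cases "i = 0")
    case True
    then show ?thesis using sum_sq_rows_rho_le[OF x Gx] by (simp add: rhoj_def L_def)
  next
    case False
    then have "(\<Sum>n\<in>{1..M}. (cmod (integral {0..x} (\<lambda>t. cos (rhoj p lam n i * of_real t) * G t)))^2)
        = (\<Sum>n\<in>{1..M}. (cmod (integral {0..x} (\<lambda>t. cos (of_real (rho_t p n * t)) * G t)))^2)"
      by (simp add: rhoj_def)
    also have "\<dots> \<le> (real p + 2) * (pi * L)"
      unfolding L_def by (rule sum_sq_model_rows_le[OF x Gx])
    also have "\<dots> \<le> row_const p \<Omega> * L"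
      using L unfolding row_const_def by (simp add: algebra_simps)
    finally show ?thesis .
  qed
  also have "\<dots> \<le> row_const p \<Omega> * integral {0..pi} (\<lambda>t. (cmod (G t))^2)"
    using L by (intro mult_left_mono) auto
  finally show ?thesis .
qed

end

section \<open>L2 bounds for blocks of columns\<close>

definition low_block_const :: "nat \<Rightarrow> real \<Rightarrow> real" where
  "low_block_const p \<Omega> = pi * (real p + 1) * (cos_growth \<Omega> * (alpha_bound \<Omega> + 5))^2"

definition high_block_const :: "real \<Rightarrow> real" where
  "high_block_const \<Omega> =
     3 * pi * ((alpha_bound \<Omega> + 1)^2 + pi^2 + (2 * cos_growth \<Omega> * pi * (alpha_bound \<Omega> + 3) * \<Omega>)^2)"

definition block_const :: "nat \<Rightarrow> real \<Rightarrow> real" where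
  "block_const p \<Omega> = 2 * low_block_const p \<Omega> + 2 * high_block_const \<Omega>"

lemma block_consts_nonneg [simp]:
  "0 \<le> low_block_const p \<Omega>" "0 \<le> high_block_const \<Omega>" "0 \<le> block_const p \<Omega>"
  by (simp_all add: low_block_const_def high_block_const_def block_const_def)

locale in_ball_bounded_seq = in_ball +
  fixes f :: "nat \<Rightarrow> nat \<Rightarrow> complex"
  assumes bounded_f: "bounded_seq f"
begin

lemma norm_f_le: "1 \<le> k \<Longrightarrow> j \<in> {0,1} \<Longrightarrow> cmod (f k j) \<le> norm_m f"
  by (rule norm_le_norm_m[OF bounded_f])

lemma norm_m_f_nonneg [simp]: "0 \<le> norm_m f"
  by (rule norm_m_nonneg[OF bounded_f])


lemma norm_qt_column_le:
  assumes t: "t \<in> {0..pi}" and k: "1 \<le> k"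
  shows "cmod (qt_column p lam al f k t)
           \<le> cos_growth \<Omega> * (alpha_bound \<Omega> + 5) * norm_m f * xi p lam al k"
proof -
  let ?c = "cos (rho lam k * of_real t)" and ?d = "cos (of_real (rho_t p k * t)) :: complex"
  let ?E = "cos_growth \<Omega>" and ?A = "alpha_bound \<Omega>" and ?F = "norm_m f" and ?x = "xi p lam al k"
  have b1: "cmod (al k * ?c * rho_hat p lam k * f k 0) \<le> ?A * ?E * ?x * ?F"
    unfolding norm_mult
    using norm_al_le[OF k] norm_cos_rho_le[OF t k] norm_rho_hat_le_xi[of k] norm_f_le[OF k]
    by (intro mult_mono) auto
  have b2: "cmod ((al k - of_real (alpha_t p k)) * ?c * f k 1) \<le> ?x * ?E * ?F"
    unfolding norm_mult using norm_al_diff_le_xi[of k] norm_cos_rho_le[OF t k] norm_f_le[OF k]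
    by (intro mult_mono) auto
  have b3: "cmod (of_real (alpha_t p k) * (?c - ?d) * f k 1) \<le> (2/pi) * (2 * ?E * pi * ?x) * ?F"
    unfolding norm_mult norm_of_real
    using abs_alpha_t_le[of p k] norm_cos_rho_sub_le[OF t k] norm_f_le[OF k]
    by (intro mult_mono) auto
  have "qt_column p lam al f k t = al k * ?c * rho_hat p lam k * f k 0
      + (al k - of_real (alpha_t p k)) * ?c * f k 1 + of_real (alpha_t p k) * (?c - ?d) * f k 1"
    unfolding qt_column_def by (simp add: algebra_simps)
  also have "cmod \<dots> \<le> ?A * ?E * ?x * ?F + ?x * ?E * ?F + (2/pi) * (2 * ?E * pi * ?x) * ?F"
    by (rule order_trans[OF norm_triangle_ineq
        add_mono[OF order_trans[OF norm_triangle_ineq add_mono[OF b1 b2]] b3]])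
  also have "\<dots> = ?E * (?A + 5) * ?F * ?x"
    by (simp add: field_simps)
  finally show ?thesis .
qed

text \<open>The coefficients of the expansion of qt_column k to first order in rho_hat p lam k.\<close>
definition beta :: "nat \<Rightarrow> complex" where
  "beta k = al k * rho_hat p lam k * f k 0 + (al k - of_real (alpha_t p k)) * f k 1"

definition gamma :: "nat \<Rightarrow> complex" where
  "gamma k = - of_real (alpha_t p k) * rho_hat p lam k * f k 1"

lemma norm_beta_le: "1 \<le> k \<Longrightarrow> cmod (beta k) \<le> (alpha_bound \<Omega> + 1) * norm_m f * xi p lam al k"
proof -
  assume k: "1 \<le> k"
  have b1: "cmod (al k * rho_hat p lam k * f k 0) \<le> alpha_bound \<Omega> * xi p lam al k * norm_m f"
    unfolding norm_mult using norm_al_le[OF k] norm_rho_hat_le_xi[of k] norm_f_le[OF k]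
    by (intro mult_mono) auto
  have b2: "cmod ((al k - of_real (alpha_t p k)) * f k 1) \<le> xi p lam al k * norm_m f"
    unfolding norm_mult using norm_al_diff_le_xi[of k] norm_f_le[OF k] by (intro mult_mono) auto
  have "cmod (beta k) \<le> alpha_bound \<Omega> * xi p lam al k * norm_m f + xi p lam al k * norm_m f"
    unfolding beta_def by (rule order_trans[OF norm_triangle_ineq add_mono[OF b1 b2]])
  then show ?thesis by (simp add: algebra_simps)
qed

lemma norm_gamma_le: "1 \<le> k \<Longrightarrow> cmod (gamma k) \<le> norm_m f * xi p lam al k"
proof -
  assume k: "1 \<le> k"
  have "cmod (gamma k) \<le> (2/pi) * xi p lam al k * norm_m f"
    unfolding gamma_def norm_mult norm_minus_cancel norm_of_real
    using abs_alpha_t_le[of p k] norm_rho_hat_le_xi[of k] norm_f_le[OF k]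
    by (intro mult_mono) auto
  also have "\<dots> \<le> 1 * (xi p lam al k * norm_m f)"
    unfolding mult.assoc using pi_gt3 by (intro mult_right_mono) (auto simp: field_simps)
  finally show ?thesis by (simp add: mult_ac)
qed

lemma norm_qt_column_remainder_le:
  assumes t: "t \<in> {0..pi}" and k: "1 \<le> k"
  shows "cmod (qt_column p lam al f k t - beta k * cos (of_real (rho_t p k * t))
                - gamma k * of_real t * sin (of_real (rho_t p k * t)))
           \<le> 2 * cos_growth \<Omega> * pi * (alpha_bound \<Omega> + 3) * norm_m f * (xi p lam al k)^2"
proof -
  let ?c = "cos (rho lam k * of_real t)" and ?d = "cos (of_real (rho_t p k * t)) :: complex"
  let ?s = "sin (of_real (rho_t p k * t)) :: complex"
  let ?E = "cos_growth \<Omega>" and ?A = "alpha_bound \<Omega>" and ?F = "norm_m f" and ?x = "xi p lam al k"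
  have "qt_column p lam al f k t - beta k * ?d - gamma k * of_real t * ?s
     = al k * rho_hat p lam k * f k 0 * (?c - ?d) + (al k - of_real (alpha_t p k)) * f k 1 * (?c - ?d)
      + of_real (alpha_t p k) * f k 1 * (?c - ?d + rho_hat p lam k * of_real t * ?s)"
    unfolding qt_column_def beta_def gamma_def by (simp add: algebra_simps)
  also have "cmod \<dots> \<le> ?A * ?x * ?F * (2 * ?E * pi * ?x) + ?x * ?F * (2 * ?E * pi * ?x)
      + (2/pi) * ?F * (2 * ?E * pi^2 * ?x^2)"
  proof -
    have b1: "cmod (al k * rho_hat p lam k * f k 0 * (?c - ?d)) \<le> ?A * ?x * ?F * (2 * ?E * pi * ?x)"
      unfolding norm_mult
      using norm_al_le[OF k] norm_rho_hat_le_xi[of k] norm_f_le[OF k] norm_cos_rho_sub_le[OF t k]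
      by (intro mult_mono) auto
    have b2: "cmod ((al k - of_real (alpha_t p k)) * f k 1 * (?c - ?d)) \<le> ?x * ?F * (2 * ?E * pi * ?x)"
      unfolding norm_mult using norm_al_diff_le_xi[of k] norm_f_le[OF k] norm_cos_rho_sub_le[OF t k]
      by (intro mult_mono) auto
    have b3: "cmod (of_real (alpha_t p k) * f k 1 * (?c - ?d + rho_hat p lam k * of_real t * ?s))
        \<le> (2/pi) * ?F * (2 * ?E * pi^2 * ?x^2)"
      unfolding norm_mult norm_of_real
      using abs_alpha_t_le[of p k] norm_f_le[OF k] norm_cos_rho_sub_taylor_le[OF t k]
      by (intro mult_mono) auto
    show ?thesis
      by (rule order_trans[OF norm_triangle_ineq
          add_mono[OF order_trans[OF norm_triangle_ineq add_mono[OF b1 b2]] b3]])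
  qed
  also have "\<dots> = 2 * ?E * pi * (?A + 3) * ?F * ?x^2"
    by (simp add: field_simps power2_eq_square)
  finally show ?thesis .
qed

lemma integral_low_block_le:
  assumes K: "finite K" "K \<subseteq> {1..p+1}"
  shows "integral {0..pi} (\<lambda>t. (cmod (\<Sum>k\<in>K. qt_column p lam al f k t))^2)
           \<le> low_block_const p \<Omega> * (norm_m f)^2 * (\<Sum>k\<in>K. (xi p lam al k)^2)"
proof -
  define c where "c = cos_growth \<Omega> * (alpha_bound \<Omega> + 5) * norm_m f"
  have c: "0 \<le> c" unfolding c_def by (intro mult_nonneg_nonneg add_nonneg_nonneg) auto
  have card: "real (card K) \<le> real p + 1"
    using card_mono[OF _ K(2)] by simp
  have "(cmod (\<Sum>k\<in>K. qt_column p lam al f k t))^2 \<le> c^2 * (real p + 1) * (\<Sum>k\<in>K. (xi p lam al k)^2)"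
    if t: "t \<in> {0..pi}" for t
  proof -
    have "cmod (\<Sum>k\<in>K. qt_column p lam al f k t) \<le> (\<Sum>k\<in>K. c * xi p lam al k)"
      using K(2) norm_qt_column_le[OF t] unfolding c_def
      by (intro order_trans[OF norm_sum sum_mono]) (auto simp: subset_iff)
    then have "(cmod (\<Sum>k\<in>K. qt_column p lam al f k t))^2 \<le> (\<Sum>k\<in>K. c * xi p lam al k)^2"
      by (intro power_mono) auto
    also have "\<dots> \<le> (\<Sum>k\<in>K. (c * xi p lam al k)^2) * real (card K)"
      by (rule sum_squared_le_sum_of_squares)
    also have "\<dots> \<le> (\<Sum>k\<in>K. (c * xi p lam al k)^2) * (real p + 1)"
      using card by (intro mult_left_mono sum_nonneg) auto
    finally show ?thesis by (simp add: power_mult_distrib sum_distrib_left mult_ac)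
  qed
  then have "integral {0..pi} (\<lambda>t. (cmod (\<Sum>k\<in>K. qt_column p lam al f k t))^2)
      \<le> integral {0..pi} (\<lambda>t. c^2 * (real p + 1) * (\<Sum>k\<in>K. (xi p lam al k)^2))"
    by (intro integral_le integrable_continuous_interval continuous_intros continuous_on_qt_column) auto
  then show ?thesis by (simp add: c_def low_block_const_def power_mult_distrib mult_ac)
qed

definition cos_part :: "nat set \<Rightarrow> real \<Rightarrow> complex" where
  "cos_part K t = (\<Sum>k\<in>K. beta k * cos (of_real (rho_t p k * t)))"

definition sin_part :: "nat set \<Rightarrow> real \<Rightarrow> complex" where
  "sin_part K t = (\<Sum>k\<in>K. gamma k * sin (of_real (rho_t p k * t)))"

lemma norm_sum_qt_column_sq_le:
  assumes K: "finite K" "K \<subseteq> {1..}" and t: "t \<in> {0..pi}"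
  shows "(cmod (\<Sum>k\<in>K. qt_column p lam al f k t))^2
           \<le> 3 * ((cmod (cos_part K t))^2 + pi^2 * (cmod (sin_part K t))^2
                  + (2 * cos_growth \<Omega> * pi * (alpha_bound \<Omega> + 3) * \<Omega>)^2 * (norm_m f)^2
                    * (\<Sum>k\<in>K. (xi p lam al k)^2))"
proof -
  define M where "M = 2 * cos_growth \<Omega> * pi * (alpha_bound \<Omega> + 3) * norm_m f"
  define \<Psi> where "\<Psi> = (\<Sum>k\<in>K. (xi p lam al k)^2)"
  define R where "R = (\<Sum>k\<in>K. qt_column p lam al f k t - beta k * cos (of_real (rho_t p k * t))
        - gamma k * of_real t * sin (of_real (rho_t p k * t)))"
  have \<Psi>: "0 \<le> \<Psi>" "\<Psi> \<le> \<Omega>^2"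
    unfolding \<Psi>_def using K by (auto intro!: sum_nonneg sum_xi_sq_le)
  have "cmod R \<le> (\<Sum>k\<in>K. M * (xi p lam al k)^2)"
    unfolding R_def M_def using K(2) norm_qt_column_remainder_le[OF t]
    by (intro order_trans[OF norm_sum sum_mono]) (auto simp: subset_iff)
  also have "\<dots> = M * \<Psi>"
    by (simp add: \<Psi>_def sum_distrib_left)
  finally have "(cmod R)^2 \<le> (M * \<Psi>)^2"
    by (intro power_mono) auto
  also have "\<dots> = M^2 * (\<Psi> * \<Psi>)"
    by (simp add: power_mult_distrib power2_eq_square)
  also have "\<dots> \<le> M^2 * (\<Omega>^2 * \<Psi>)"
    using \<Psi> by (intro mult_left_mono mult_right_mono) auto
  finally have R: "(cmod R)^2 \<le> (M * \<Omega>)^2 * \<Psi>"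
    by (simp add: power_mult_distrib mult_ac)
  have "(\<Sum>k\<in>K. qt_column p lam al f k t) = cos_part K t + of_real t * sin_part K t + R"
    by (simp add: cos_part_def sin_part_def R_def sum_subtractf sum_distrib_left sum.distrib
        algebra_simps)
  then have "(cmod (\<Sum>k\<in>K. qt_column p lam al f k t))^2
      \<le> (cmod (cos_part K t) + t * cmod (sin_part K t) + cmod R)^2"
    using t norm_triangle_ineq[of "cos_part K t + of_real t * sin_part K t" R]
      norm_triangle_ineq[of "cos_part K t" "of_real t * sin_part K t"]
    by (intro power_mono) (auto simp: norm_mult)
  also have "\<dots> \<le> 3 * ((cmod (cos_part K t))^2 + (t * cmod (sin_part K t))^2 + (cmod R)^2)"
    by (rule power2_add3_le)
  also have "\<dots> \<le> 3 * ((cmod (cos_part K t))^2 + pi^2 * (cmod (sin_part K t))^2 + (M * \<Omega>)^2 * \<Psi>)"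
    using t R by (intro mult_left_mono add_mono)
      (auto simp: power_mult_distrib intro!: mult_right_mono power_mono)
  finally show ?thesis
    by (simp add: M_def \<Psi>_def power_mult_distrib mult_ac)
qed

lemma integral_cos_part_sq_le:
  assumes "finite K" "K \<subseteq> {p+1..}"
  shows "integral {0..pi} (\<lambda>t. (cmod (cos_part K t))^2)
           \<le> pi * (alpha_bound \<Omega> + 1)^2 * (norm_m f)^2 * (\<Sum>k\<in>K. (xi p lam al k)^2)"
proof -
  have "integral {0..pi} (\<lambda>t. (cmod (cos_part K t))^2) \<le> pi * (\<Sum>k\<in>K. (cmod (beta k))^2)"
    unfolding cos_part_def by (rule integral_cos_rho_t_combination_le[OF assms])
  also have "\<dots> \<le> pi * (\<Sum>k\<in>K. ((alpha_bound \<Omega> + 1) * norm_m f * xi p lam al k)^2)"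
    using assms(2) by (intro mult_left_mono sum_mono power_mono norm_beta_le) auto
  finally show ?thesis by (simp add: power_mult_distrib sum_distrib_left mult_ac)
qed

lemma integral_sin_part_sq_le:
  assumes "finite K" "K \<subseteq> {p+1..}"
  shows "integral {0..pi} (\<lambda>t. (cmod (sin_part K t))^2)
           \<le> pi * (norm_m f)^2 * (\<Sum>k\<in>K. (xi p lam al k)^2)"
proof -
  have "integral {0..pi} (\<lambda>t. (cmod (sin_part K t))^2) \<le> pi * (\<Sum>k\<in>K. (cmod (gamma k))^2)"
    unfolding sin_part_def by (rule integral_sin_rho_t_combination_le[OF assms])
  also have "\<dots> \<le> pi * (\<Sum>k\<in>K. (norm_m f * xi p lam al k)^2)"
    using assms(2) by (intro mult_left_mono sum_mono power_mono norm_gamma_le) auto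
  finally show ?thesis by (simp add: power_mult_distrib sum_distrib_left mult_ac)
qed

lemma integral_high_block_le:
  assumes K: "finite K" "K \<subseteq> {p+1..}"
  shows "integral {0..pi} (\<lambda>t. (cmod (\<Sum>k\<in>K. qt_column p lam al f k t))^2)
           \<le> high_block_const \<Omega> * (norm_m f)^2 * (\<Sum>k\<in>K. (xi p lam al k)^2)"
proof -
  define c where "c = (2 * cos_growth \<Omega> * pi * (alpha_bound \<Omega> + 3) * \<Omega>)^2 * (norm_m f)^2
      * (\<Sum>k\<in>K. (xi p lam al k)^2)"
  have cont: "continuous_on {0..pi} (cos_part K)" "continuous_on {0..pi} (sin_part K)"
    unfolding cos_part_def sin_part_def by (intro continuous_intros)+
  have bound: "((\<lambda>t. 3 * ((cmod (cos_part K t))^2 + pi^2 * (cmod (sin_part K t))^2 + c)) has_integral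
      3 * (integral {0..pi} (\<lambda>t. (cmod (cos_part K t))^2)
           + pi^2 * integral {0..pi} (\<lambda>t. (cmod (sin_part K t))^2) + pi * c)) {0..pi}"
    using has_integral_const_real[of c 0 pi]
    by (intro has_integral_mult_right has_integral_add integrable_integral integrable_continuous_interval
        continuous_intros cont) auto
  have "integral {0..pi} (\<lambda>t. (cmod (\<Sum>k\<in>K. qt_column p lam al f k t))^2)
      \<le> 3 * (integral {0..pi} (\<lambda>t. (cmod (cos_part K t))^2)
             + pi^2 * integral {0..pi} (\<lambda>t. (cmod (sin_part K t))^2) + pi * c)"
  proof (rule has_integral_le[OF integrable_integral bound])
    show "(\<lambda>t. (cmod (\<Sum>k\<in>K. qt_column p lam al f k t))^2) integrable_on {0..pi}"
      by (intro integrable_continuous_interval continuous_intros continuous_on_qt_column)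
  next
    fix t assume "t \<in> {0..pi}"
    then show "(cmod (\<Sum>k\<in>K. qt_column p lam al f k t))^2
        \<le> 3 * ((cmod (cos_part K t))^2 + pi^2 * (cmod (sin_part K t))^2 + c)"
      unfolding c_def using K by (intro norm_sum_qt_column_sq_le) auto
  qed
  also have "\<dots> \<le> 3 * (pi * (alpha_bound \<Omega> + 1)^2 * (norm_m f)^2 * (\<Sum>k\<in>K. (xi p lam al k)^2)
             + pi^2 * (pi * (norm_m f)^2 * (\<Sum>k\<in>K. (xi p lam al k)^2)) + pi * c)"
    by (intro mult_left_mono add_mono integral_cos_part_sq_le integral_sin_part_sq_le K) auto
  finally show ?thesis
    by (simp add: c_def high_block_const_def algebra_simps power2_eq_square power3_eq_cube)
qed

lemma integral_block_le:
  assumes K: "finite K" "K \<subseteq> {1..}"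
  shows "integral {0..pi} (\<lambda>t. (cmod (\<Sum>k\<in>K. qt_column p lam al f k t))^2)
           \<le> block_const p \<Omega> * (norm_m f)^2 * (\<Sum>k\<in>K. (xi p lam al k)^2)"
proof -
  define Ks where "Ks = {k\<in>K. k \<le> p + 1}"
  define Kl where "Kl = {k\<in>K. p + 1 < k}"
  have fin: "finite Ks" "finite Kl" using K by (auto simp: Ks_def Kl_def)
  have "(\<Sum>k\<in>K. qt_column p lam al f k t)
      = (\<Sum>k\<in>Ks. qt_column p lam al f k t) + (\<Sum>k\<in>Kl. qt_column p lam al f k t)" for t
    using fin by (subst sum.union_disjoint[symmetric]) (auto intro!: sum.cong simp: Ks_def Kl_def)
  then have "integral {0..pi} (\<lambda>t. (cmod (\<Sum>k\<in>K. qt_column p lam al f k t))^2)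
      \<le> 2 * integral {0..pi} (\<lambda>t. (cmod (\<Sum>k\<in>Ks. qt_column p lam al f k t))^2)
        + 2 * integral {0..pi} (\<lambda>t. (cmod (\<Sum>k\<in>Kl. qt_column p lam al f k t))^2)"
    by (simp only:) (intro integral_norm_add_sq_le continuous_intros continuous_on_qt_column)
  also have "\<dots> \<le> 2 * (low_block_const p \<Omega> * (norm_m f)^2 * (\<Sum>k\<in>Ks. (xi p lam al k)^2))
      + 2 * (high_block_const \<Omega> * (norm_m f)^2 * (\<Sum>k\<in>Kl. (xi p lam al k)^2))"
    using K(2)
    by (intro add_mono mult_left_mono integral_low_block_le integral_high_block_le fin)
      (auto simp: Ks_def Kl_def)
  also have "\<dots> \<le> 2 * (low_block_const p \<Omega> * (norm_m f)^2 * (\<Sum>k\<in>K. (xi p lam al k)^2))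
      + 2 * (high_block_const \<Omega> * (norm_m f)^2 * (\<Sum>k\<in>K. (xi p lam al k)^2))"
    using K(1) by (intro add_mono mult_left_mono sum_mono2 mult_nonneg_nonneg) (auto simp: Ks_def Kl_def)
  also have "\<dots> = block_const p \<Omega> * (norm_m f)^2 * (\<Sum>k\<in>K. (xi p lam al k)^2)"
    by (simp add: block_const_def algebra_simps)
  finally show ?thesis .
qed

lemma sum_sq_rows_block_le:
  assumes x: "x \<in> {0..pi}" and K: "finite K" "K \<subseteq> {1..}"
  shows "(\<Sum>n\<in>{1..M}. (cmod (\<Sum>k\<in>K. QT_term p lam al x f n i k))^2)
           \<le> row_const p \<Omega> * block_const p \<Omega> * (norm_m f)^2 * (\<Sum>k\<in>K. (xi p lam al k)^2)"
proof -
  have "(\<Sum>n\<in>{1..M}. (cmod (\<Sum>k\<in>K. QT_term p lam al x f n i k))^2)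
      \<le> row_const p \<Omega> * integral {0..pi} (\<lambda>t. (cmod (\<Sum>k\<in>K. qt_column p lam al f k t))^2)"
    unfolding sum_QT_term_eq_integral[OF K(1)] using x
    by (intro sum_sq_rows_le) (auto intro!: continuous_intros continuous_on_qt_column)
  also have "\<dots> \<le> row_const p \<Omega> * (block_const p \<Omega> * (norm_m f)^2 * (\<Sum>k\<in>K. (xi p lam al k)^2))"
    by (intro mult_left_mono integral_block_le K) simp
  finally show ?thesis by (simp add: mult_ac)
qed

lemma summable_QT_row:
  assumes x: "x \<in> {0..pi}" and n: "1 \<le> n"
  shows "summable (\<lambda>k. QT_term p lam al x f n i (Suc k))"
proof (rule summable_if_sq_block_bound[OF summable_xi_sq])
  let ?Q = "row_const p \<Omega> * block_const p \<Omega> * (norm_m f)^2"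
  show "0 \<le> ?Q" by simp
  fix m m' :: nat
  have shift: "(\<Sum>k\<in>Suc ` {m..<m'}. g k) = (\<Sum>k\<in>{m..<m'}. g (Suc k))" for g :: "nat \<Rightarrow> 'b::comm_monoid_add"
    by (rule sum.reindex_cong[of Suc]) auto
  have "(cmod (\<Sum>k\<in>Suc ` {m..<m'}. QT_term p lam al x f n i k))^2
      \<le> (\<Sum>n'\<in>{1..n}. (cmod (\<Sum>k\<in>Suc ` {m..<m'}. QT_term p lam al x f n' i k))^2)"
    using n by (intro member_le_sum) auto
  also have "\<dots> \<le> ?Q * (\<Sum>k\<in>Suc ` {m..<m'}. (xi p lam al k)^2)"
    by (rule sum_sq_rows_block_le[OF x]) auto
  finally show "(cmod (\<Sum>k\<in>{m..<m'}. QT_term p lam al x f n i (Suc k)))^2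
      \<le> ?Q * (\<Sum>k\<in>{m..<m'}. (xi p lam al (Suc k))^2)"
    unfolding shift .
qed simp

lemma partial_sum_sq_QT_le:
  assumes x: "x \<in> {0..pi}"
  shows "(\<Sum>n<M. (cmod (QT p lam al x f (Suc n) i))^2)
           \<le> row_const p \<Omega> * block_const p \<Omega> * \<Omega>^2 * (norm_m f)^2"
proof -
  let ?Q = "row_const p \<Omega> * block_const p \<Omega> * (norm_m f)^2"
  have "(\<Sum>n\<in>{1..M}. (cmod (QT p lam al x f n i))^2) \<le> ?Q * \<Omega>^2"
  proof (rule LIMSEQ_le_const2)
    show "(\<lambda>N. \<Sum>n\<in>{1..M}. (cmod (\<Sum>k<N. QT_term p lam al x f n i (Suc k)))^2)
        \<longlonglongrightarrow> (\<Sum>n\<in>{1..M}. (cmod (QT p lam al x f n i))^2)"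
      unfolding QT_def using x
      by (intro tendsto_sum tendsto_power tendsto_norm summable_LIMSEQ summable_QT_row) auto
    have "(\<Sum>n\<in>{1..M}. (cmod (\<Sum>k<N. QT_term p lam al x f n i (Suc k)))^2) \<le> ?Q * \<Omega>^2" for N
    proof -
      have "(\<Sum>n\<in>{1..M}. (cmod (\<Sum>k<N. QT_term p lam al x f n i (Suc k)))^2)
          = (\<Sum>n\<in>{1..M}. (cmod (\<Sum>k\<in>{1..N}. QT_term p lam al x f n i k))^2)"
        by (simp add: sum.atLeast1_atMost_eq)
      also have "\<dots> \<le> ?Q * (\<Sum>k\<in>{1..N}. (xi p lam al k)^2)"
        by (rule sum_sq_rows_block_le[OF x]) auto
      also have "\<dots> \<le> ?Q * \<Omega>^2"
        by (intro mult_left_mono sum_xi_sq_le) auto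
      finally show ?thesis .
    qed
    then show "\<exists>N. \<forall>N'\<ge>N. (\<Sum>n\<in>{1..M}. (cmod (\<Sum>k<N'. QT_term p lam al x f n i (Suc k)))^2) \<le> ?Q * \<Omega>^2"
      by blast
  qed
  then show ?thesis by (simp add: sum.atLeast1_atMost_eq mult_ac)
qed

lemma QT_in_l2_norm_le:
  assumes x: "x \<in> {0..pi}"
  shows "in_l2 (QT p lam al x f)"
    and "norm_l2 (QT p lam al x f) \<le> sqrt (2 * row_const p \<Omega> * block_const p \<Omega> * \<Omega>^2) * norm_m f"
proof -
  let ?g = "\<lambda>n. \<Sum>i\<in>{0::nat,1}. (cmod (QT p lam al x f (Suc n) i))^2"
  let ?C = "2 * row_const p \<Omega> * block_const p \<Omega> * \<Omega>^2"
  have g: "0 \<le> ?g n" for n by (intro sum_nonneg) auto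
  have partial: "(\<Sum>n<M. ?g n) \<le> ?C * (norm_m f)^2" for M
    using partial_sum_sq_QT_le[OF x, where M = M and i = 0]
      partial_sum_sq_QT_le[OF x, where M = M and i = 1]
    by (simp add: sum.distrib)
  show l2: "in_l2 (QT p lam al x f)"
    unfolding in_l2_def by (rule summableI_nonneg_bounded[OF g partial])
  have "norm_l2 (QT p lam al x f) \<le> sqrt (?C * (norm_m f)^2)"
    unfolding norm_l2_def using suminf_le_const[OF l2[unfolded in_l2_def] partial] by simp
  also have "\<dots> = sqrt ?C * norm_m f"
    by (simp add: real_sqrt_mult)
  finally show "norm_l2 (QT p lam al x f) \<le> sqrt ?C * norm_m f" .
qed

end

theorem lemma3p3:
  fixes p :: nat and \<Omega> :: real
  assumes "\<Omega> > 0"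
  shows "\<exists>C. \<forall>lam al x f.
           in_B p \<Omega> lam al \<longrightarrow> x \<in> {0..pi} \<longrightarrow> bounded_seq f \<longrightarrow>
             (\<forall>n\<ge>1. \<forall>i\<in>{0,1}. summable (\<lambda>k. QT_term p lam al x f n i (Suc k)))
           \<and> in_l2 (QT p lam al x f)
           \<and> norm_l2 (QT p lam al x f) \<le> C * norm_m f"
proof (intro exI allI impI)
  fix lam al x f
  assume "in_B p \<Omega> lam al" "x \<in> {0..pi}" "bounded_seq f"
  then interpret in_ball_bounded_seq p \<Omega> lam al f
    using assms by unfold_locales
  show "(\<forall>n\<ge>1. \<forall>i\<in>{0,1}. summable (\<lambda>k. QT_term p lam al x f n i (Suc k)))
      \<and> in_l2 (QT p lam al x f)
      \<and> norm_l2 (QT p lam al x f) \<le> sqrt (2 * row_const p \<Omega> * block_const p \<Omega> * \<Omega>^2) * norm_m f"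
    using \<open>x \<in> {0..pi}\<close> by (intro conjI allI impI ballI summable_QT_row QT_in_l2_norm_le)
qed

end
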